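(* Let $k$ be a field with $\mathrm{char}(k)\neq2$, let $m\in\{3,4\}$, and let $Q_1,Q_2$ be quadratic forms in $m$ variables over $k$ with matrices of second partial derivatives $A$ and $B$. Assume that $\ker(A)\cap\ker(B)=0$ (i.e. $\{Q_1=Q_2=0\}\subset\mathbb{P}^{m-1}$ is not a cone) and that the binary form $\det(Ax+Bz)$ is identically zero. Then: (i) if $m=3$, $(Q_1,Q_2)$ is $k$-equivalent to $(x_1x_2,\ x_2x_3)$; (ii) if $m=4$, $(Q_1,Q_2)$ is $k$-equivalent to $(x_1x_2,\ x_2x_3-x_4^2)$.
   Context: Two pairs of quadratic forms in $m$ variables over $k$ are $k$-equivalent if they lie in the same orbit of $GL_2(k)\times GL_m(k)$, where $(M,N)$ acts by replacing $(Q_1,Q_2)$ by $(m_{11}Q_1+m_{12}Q_2,\ m_{21}Q_1+m_{22}Q_2)$ and then substituting $x_j\leftarrow\sum_i n_{ij}x_i$. *)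

theory Defs
  imports "HOL-Analysis.Analysis" "HOL-Computational_Algebra.Polynomial" "HOL-Library.Numeral_Type"
begin

definition is_quadratic_form :: "('a::field ^ 'n \<Rightarrow> 'a) \<Rightarrow> bool" where
  "is_quadratic_form Q \<longleftrightarrow>
     (\<exists>c::'n \<Rightarrow> 'n \<Rightarrow> 'a. \<forall>x. Q x = (\<Sum>i\<in>UNIV. \<Sum>j\<in>UNIV. c i j * x$i * x$j))"

text \<open>A is the matrix of second partial derivatives of Q:
  for Q = sum c_ij x_i x_j one has d^2 Q / dx_i dx_j = c_ij + c_ji.\<close>
definition is_hessian :: "'a::field ^ 'n ^ 'n \<Rightarrow> ('a ^ 'n \<Rightarrow> 'a) \<Rightarrow> bool" where
  "is_hessian A Q \<longleftrightarrow>
     (\<exists>c::'n \<Rightarrow> 'n \<Rightarrow> 'a. (\<forall>x. Q x = (\<Sum>i\<in>UNIV. \<Sum>j\<in>UNIV. c i j * x$i * x$j))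
        \<and> (\<forall>i j. A$i$j = c i j + c j i))"

text \<open>The binary form det(A x + B z) as a bivariate polynomial
  (inner variable x, outer variable z).\<close>
definition binary_det :: "'a::field ^ 'n ^ 'n \<Rightarrow> 'a ^ 'n ^ 'n \<Rightarrow> 'a poly poly" where
  "binary_det A B = det (\<chi> i j. [: [:0, A$i$j:], [:B$i$j:] :])"

text \<open>(P1,P2) is in the GL_2(k) x GL_m(k)-orbit of (Q1,Q2): P_r = (m_r1 Q1 + m_r2 Q2)
  after substituting x_j <- sum_i n_ij x_i.\<close>
definition k_equiv :: "('a::field ^ 'n \<Rightarrow> 'a) \<Rightarrow> ('a ^ 'n \<Rightarrow> 'a) \<Rightarrow>
                       ('a ^ 'n \<Rightarrow> 'a) \<Rightarrow> ('a ^ 'n \<Rightarrow> 'a) \<Rightarrow> bool" where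
  "k_equiv Q1 Q2 P1 P2 \<longleftrightarrow>
     (\<exists>(M::'a^2^2) (N::'a^'n^'n). invertible M \<and> invertible N \<and>
        (\<forall>x. P1 x = M$1$1 * Q1 (\<chi> j. \<Sum>i\<in>UNIV. N$i$j * x$i) + M$1$2 * Q2 (\<chi> j. \<Sum>i\<in>UNIV. N$i$j * x$i)) \<and>
        (\<forall>x. P2 x = M$2$1 * Q1 (\<chi> j. \<Sum>i\<in>UNIV. N$i$j * x$i) + M$2$2 * Q2 (\<chi> j. \<Sum>i\<in>UNIV. N$i$j * x$i)))"

end

theory Submission
  imports Defs "HOL-Computational_Algebra.Fraction_Field"
begin

text \<open>Since \<open>det(A x + B z)\<close> vanishes identically, the pencil \<open>B + t A\<close> has a nonzero polynomial
  kernel vector. Its coefficients \<open>v\<^sub>0, \<dots>, v\<^sub>d\<close> satisfy \<open>B v\<^sub>0 = 0\<close> and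
  \<open>B v\<^sub>k\<^sub>+\<^sub>1 + A v\<^sub>k = 0\<close>, and by symmetry of \<open>A\<close> and \<open>B\<close> they are isotropic for both forms.
  For a kernel vector of minimal degree \<open>d \<ge> 2\<close>, the vectors \<open>v\<^sub>0, v\<^sub>1, v\<^sub>2\<close> and the covectors
  \<open>A v\<^sub>0, A v\<^sub>1\<close> would be independent and mutually annihilating, which needs at least five
  variables. Hence there are \<open>w, u\<close> with \<open>B w = 0\<close>, \<open>A u = 0\<close> and \<open>B u = -A w\<close>; as the pencil has
  no common kernel, \<open>f = A w\<close> is nonzero and a vector \<open>y\<close> with \<open>f\<cdot>y = 1\<close> (made isotropic for
  both forms by adding multiples of \<open>w\<close> and \<open>u\<close>) completes \<open>w, y, -u\<close> to a basis in which
  \<open>Q\<^sub>1 = x\<^sub>1x\<^sub>2\<close> and \<open>Q\<^sub>2 = x\<^sub>2x\<^sub>3\<close>. For four variables a fourth basis vector \<open>z\<close> orthogonal to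
  \<open>w, y, u\<close> for both forms adds \<open>x\<^sub>4\<^sup>2 Q\<^sub>1(z)\<close> and \<open>x\<^sub>4\<^sup>2 Q\<^sub>2(z)\<close>; these coefficients do not both
  vanish, since otherwise \<open>z\<close> would lie in the common kernel, and a change of basis of the
  pencil followed by a substitution in \<open>x\<^sub>1, x\<^sub>3\<close> gives \<open>(x\<^sub>1x\<^sub>2, x\<^sub>2x\<^sub>3 - x\<^sub>4\<^sup>2)\<close>.\<close>

lemma det_map_ring_hom:
  fixes h :: "'a::comm_ring_1 \<Rightarrow> 'b::comm_ring_1"
  assumes add: "\<And>a b. h (a + b) = h a + h b" and mult: "\<And>a b. h (a * b) = h a * h b"
    and one: "h 1 = 1" and neg: "\<And>a. h (- a) = - h a"
  shows "det (\<chi> i j. h (M$i$j)) = h (det M)"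
proof -
  have zero: "h 0 = 0" using add[of 0 0] by simp
  have h_sum: "h (sum g S) = (\<Sum>x\<in>S. h (g x))" for g :: "_ \<Rightarrow> 'a" and S
    using sum_comp_morphism[of h g S, OF zero add] by (simp add: o_def)
  have h_prod: "h (prod g S) = (\<Prod>x\<in>S. h (g x))" for g :: "_ \<Rightarrow> 'a" and S
    by (induct S rule: infinite_finite_induct) (simp_all add: one mult)
  have h_sign: "h (of_int (sign p)) = of_int (sign p)" for p :: "'c \<Rightarrow> 'c"
    by (cases "sign p = 1") (auto simp: sign_def one neg)
  show ?thesis
    unfolding det_def h_sum by (simp add: mult h_prod h_sign)
qed

text \<open>Pass to the fraction field, take a kernel vector there and clear denominators.\<close>

lemma det_eq_0_imp_kernel:
  fixes M :: "'a::idom^'n^'n"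
  assumes "det M = 0"
  obtains y where "y \<noteq> 0" "M *v y = 0"
proof -
  define h :: "'a \<Rightarrow> 'a fract" where "h a = Fract a 1" for a
  have h_add: "h (a + b) = h a + h b" and h_mult: "h (a * b) = h a * h b"
    and h_neg: "h (- a) = - h a" and h_one: "h 1 = 1" and h_eq_0: "h a = 0 \<longleftrightarrow> a = 0" for a b
    by (simp_all add: h_def One_fract_def Zero_fract_def eq_fract)
  have h_sum: "h (sum g S) = (\<Sum>x\<in>S. h (g x))" for g :: "_ \<Rightarrow> 'a" and S
    using sum_comp_morphism[of h g S] h_add h_eq_0 by (simp add: o_def)
  define M' where "M' = (\<chi> i j. h (M$i$j))"
  have "det M' = 0"
    using det_map_ring_hom[of h M, OF h_add h_mult h_one h_neg] assms h_eq_0 by (simp add: M'_def)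
  then have "\<not> invertible M'"
    by (simp add: invertible_det_nz)
  then obtain x where x0: "x \<noteq> 0" and M'x: "M' *v x = 0"
    unfolding invertible_left_inverse matrix_left_invertible_ker by blast
  have "\<forall>i. \<exists>a b. x$i = Fract a b \<and> b \<noteq> 0"
    by (metis Fract_cases)
  then obtain a b where ab: "\<And>i. x$i = Fract (a i) (b i)" "\<And>i. b i \<noteq> 0"
    by metis
  define D where "D = prod b UNIV"
  define y where "y = (\<chi> i. a i * prod b (UNIV - {i}))"
  have hy: "h (y$i) = h D * x$i" for i
  proof -
    have "D = b i * prod b (UNIV - {i})"
      unfolding D_def by (simp add: prod.remove)
    then show ?thesis
      using ab[of i] by (simp add: h_def y_def eq_fract mult.commute mult.left_commute)
  qed
  have "h ((M *v y)$i) = h D * (M' *v x)$i" for i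
    by (simp add: matrix_vector_mult_def h_sum h_mult hy M'_def sum_distrib_left mult.left_commute)
  then have My: "M *v y = 0"
    using M'x h_eq_0 by (simp add: vec_eq_iff)
  obtain i where "x$i \<noteq> 0"
    using x0 by (auto simp: vec_eq_iff)
  moreover have "h D \<noteq> 0"
    using ab(2) h_eq_0 by (simp add: D_def)
  ultimately have "y$i \<noteq> 0"
    using hy[of i] h_eq_0[of 0] by (metis mult_eq_0_iff)
  then have "y \<noteq> 0"
    by auto
  with My show thesis
    using that by blast
qed

definition vdot :: "'a::field^'n \<Rightarrow> 'a^'n \<Rightarrow> 'a" where
  "vdot x y = (\<Sum>i\<in>UNIV. x$i * y$i)"

lemma vdot_add_left: "vdot (x + y) z = vdot x z + vdot y z"
  and vdot_add_right: "vdot z (x + y) = vdot z x + vdot z y"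
  and vdot_diff_left: "vdot (x - y) z = vdot x z - vdot y z"
  and vdot_diff_right: "vdot z (x - y) = vdot z x - vdot z y"
  and vdot_neg_left: "vdot (- x) y = - vdot x y"
  and vdot_neg_right: "vdot x (- y) = - vdot x y"
  and vdot_scale_left: "vdot (c *s x) y = c * vdot x y"
  and vdot_scale_right: "vdot x (c *s y) = c * vdot x y"
  by (simp_all add: vdot_def algebra_simps sum.distrib sum_subtractf sum_negf sum_distrib_left)

lemma vdot_zero_left [simp]: "vdot 0 y = 0"
  and vdot_zero_right [simp]: "vdot x 0 = 0"
  by (simp_all add: vdot_def)

lemma vdot_commute: "vdot x y = vdot y x"
  by (simp add: vdot_def mult.commute)

lemmas vdot_linear_simps = vdot_add_left vdot_add_right vdot_diff_left vdot_diff_right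
  vdot_neg_left vdot_neg_right vdot_scale_left vdot_scale_right
  matrix_vector_right_distrib matrix_vector_mult_diff_distrib vector_scalar_commute

lemma vdot_axis: "vdot z (axis i 1) = z$i"
  by (simp add: vdot_def axis_def if_distrib cong: if_cong)

lemma vdot_matrix_vector_mult: "vdot (A *v x) y = vdot x (transpose A *v y)"
proof -
  have "vdot (A *v x) y = (\<Sum>i\<in>UNIV. \<Sum>j\<in>UNIV. A$i$j * x$j * y$i)"
    by (simp add: vdot_def matrix_vector_mult_def sum_distrib_right)
  also have "\<dots> = (\<Sum>j\<in>UNIV. \<Sum>i\<in>UNIV. A$i$j * x$j * y$i)"
    by (rule sum.swap)
  also have "\<dots> = vdot x (transpose A *v y)"
    by (simp add: vdot_def matrix_vector_mult_def transpose_def sum_distrib_left mult_ac)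
  finally show ?thesis .
qed

lemma vdot_symmetric_matrix:
  assumes "transpose A = A"
  shows "vdot (A *v x) y = vdot (A *v y) x"
  by (metis assms vdot_commute vdot_matrix_vector_mult)

lemma vdot_eq_0_on_span:
  assumes "\<forall>s\<in>T. vdot z s = 0" and "x \<in> vec.span T"
  shows "vdot z x = 0"
  using assms(2)
  by (induct rule: vec.span_induct_alt) (simp_all add: assms(1) vdot_add_right vdot_scale_right)

lemma vdot_nondegenerate: "(\<And>x. vdot z x = 0) \<Longrightarrow> z = 0"
  by (metis vdot_axis vec_eq_iff zero_index)

text \<open>The coefficients \<open>v 0, \<dots>, v d\<close> of a nonzero polynomial vector \<open>v(t)\<close> with
  \<open>(P + t Q) v(t) = 0\<close>.\<close>

definition kronecker_chain :: "'a::field^'n^'n \<Rightarrow> 'a^'n^'n \<Rightarrow> (nat \<Rightarrow> 'a^'n) \<Rightarrow> nat \<Rightarrow> bool" where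
  "kronecker_chain P Q v d \<longleftrightarrow> (\<forall>k>d. v k = 0) \<and> (\<exists>k. v k \<noteq> 0) \<and> P *v v 0 = 0 \<and>
     (\<forall>k. P *v v (Suc k) + Q *v v k = 0)"

lemma binary_det_eq_0_imp_kronecker_chain:
  fixes A B :: "'a::field^'n^'n"
  assumes "binary_det A B = 0"
  obtains v d where "kronecker_chain B A v d"
proof -
  define M where "M = (\<chi> i j. [: [:0, A$i$j:], [:B$i$j:] :])"
  define M1 where "M1 = (\<chi> i j. [: B$i$j, A$i$j :])"
  have "(\<chi> i j. poly (M$i$j) 1) = M1"
    by (simp add: M_def M1_def)
  moreover have "det (\<chi> i j. poly (M$i$j) 1) = poly (det M) 1"
    by (rule det_map_ring_hom) (simp_all add: poly_minus)
  ultimately have "det M1 = 0"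
    using assms by (simp add: binary_det_def M_def)
  then obtain y where y0: "y \<noteq> 0" and M1y: "M1 *v y = 0"
    by (rule det_eq_0_imp_kernel)
  define d where "d = (\<Sum>j\<in>UNIV. degree (y$j))"
  define v where "v k = (\<chi> j. coeff (y$j) k)" for k
  have row: "(M1 *v y)$i = (\<Sum>j\<in>UNIV. smult (B$i$j) (y$j) + pCons 0 (smult (A$i$j) (y$j)))" for i
    by (simp add: M1_def matrix_vector_mult_def mult_pCons_left)
  have coeff_0: "(B *v v 0)$i = coeff ((M1 *v y)$i) 0" for i
    unfolding row by (simp add: coeff_sum v_def matrix_vector_mult_def)
  have coeff_Suc: "(B *v v (Suc k) + A *v v k)$i = coeff ((M1 *v y)$i) (Suc k)" for i k
    unfolding row by (simp add: coeff_sum sum.distrib v_def matrix_vector_mult_def)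
  have "kronecker_chain B A v d"
    unfolding kronecker_chain_def
  proof (intro conjI allI impI)
    show "v k = 0" if "d < k" for k
    proof -
      have "degree (y$j) \<le> d" for j
        unfolding d_def by (rule member_le_sum) auto
      with that show ?thesis
        by (auto simp: v_def vec_eq_iff intro!: coeff_eq_0 intro: le_less_trans)
    qed
    obtain j where "y$j \<noteq> 0"
      using y0 by (auto simp: vec_eq_iff)
    then have "v (degree (y$j)) $ j \<noteq> 0"
      by (simp add: v_def)
    then show "\<exists>k. v k \<noteq> 0"
      by (metis zero_index)
    show "B *v v 0 = 0"
      by (simp add: vec_eq_iff coeff_0 M1y)
    show "B *v v (Suc k) + A *v v k = 0" for k
      unfolding vec_eq_iff coeff_Suc by (simp add: M1y)
  qed
  then show thesis
    by (rule that)
qed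

lemma kronecker_chain_isotropic:
  assumes sym: "transpose P = P" "transpose Q = Q" and chain: "kronecker_chain P Q v d"
  shows "vdot (P *v v i) (v j) = 0" and "vdot (Q *v v i) (v j) = 0"
proof -
  from chain have P_0: "P *v v 0 = 0" and P_Suc: "\<And>k. P *v v (Suc k) = - (Q *v v k)"
    unfolding kronecker_chain_def by (auto simp: eq_neg_iff_add_eq_0)
  have P_isotropic: "vdot (P *v v i) (v j) = 0" for i j
  proof (induct i arbitrary: j)
    case 0
    then show ?case
      by (simp add: P_0)
  next
    case (Suc i)
    have "vdot (P *v v (Suc i)) (v j) = - vdot (Q *v v j) (v i)"
      by (simp add: P_Suc vdot_neg_left vdot_symmetric_matrix[OF sym(2)])
    also have "\<dots> = vdot (P *v v (Suc j)) (v i)"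
      by (simp add: P_Suc vdot_neg_left)
    also have "\<dots> = vdot (P *v v i) (v (Suc j))"
      by (rule vdot_symmetric_matrix[OF sym(1)])
    also have "\<dots> = 0"
      by (rule Suc)
    finally show ?case .
  qed
  then show "vdot (P *v v i) (v j) = 0" .
  show "vdot (Q *v v i) (v j) = 0"
    using P_isotropic[of "Suc i" j] by (simp add: P_Suc vdot_neg_left)
qed

lemma kronecker_chain_shift:
  assumes chain: "kronecker_chain P Q v d" and "v 0 = 0"
  shows "kronecker_chain P Q (\<lambda>k. v (Suc k)) (d - 1)"
proof -
  obtain k where "v k \<noteq> 0"
    using chain by (auto simp: kronecker_chain_def)
  with \<open>v 0 = 0\<close> obtain k' where "v (Suc k') \<noteq> 0"
    by (cases k) auto
  moreover have "P *v v (Suc 0) = 0"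
    using chain \<open>v 0 = 0\<close> unfolding kronecker_chain_def
    by (metis add.right_neutral matrix_vector_mult_0_right)
  ultimately show ?thesis
    using chain unfolding kronecker_chain_def by auto
qed

lemma vec_dim_three_independent:
  fixes v0 v1 v2 :: "'a::field^'n"
  assumes indep: "\<And>a b c. a *s v0 + b *s v1 + c *s v2 = 0 \<Longrightarrow> a = 0 \<and> b = 0 \<and> c = 0"
  shows "vec.dim {v2, v1, v0} = 3"
proof -
  have "v0 \<notin> vec.span {}"
    using indep[of 1 0 0] by auto
  moreover have "v1 \<notin> vec.span {v0}"
  proof
    assume "v1 \<in> vec.span {v0}"
    then obtain k where "k *s v0 + (- 1) *s v1 + 0 *s v2 = 0"
      by (auto simp: vec.span_singleton)
    then show False
      using indep by fastforce
  qed
  moreover have "v2 \<notin> vec.span {v1, v0}"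
  proof
    assume "v2 \<in> vec.span {v1, v0}"
    then obtain k l where "v2 - k *s v1 = l *s v0"
      by (auto simp: vec.span_breakdown_eq vec.span_singleton)
    then have "l *s v0 + k *s v1 + (- 1) *s v2 = 0"
      by (simp add: algebra_simps)
    then show False
      using indep by fastforce
  qed
  ultimately show ?thesis
    by (simp add: vec.dim_insert)
qed

lemma vec_span_eq_UNIV_if_dim:
  fixes S :: "('a::field^'n) set"
  assumes "CARD('n) \<le> vec.dim S"
  shows "vec.span S = UNIV"
proof -
  have "vec.span S = vec.span UNIV"
    using assms by (intro vec.dim_eq_span) (simp_all add: card_cart_basis)
  then show ?thesis
    by simp
qed

lemma annihilator_dimension:
  fixes v0 v1 v2 w0 w1 :: "'a::field^'n"
  assumes v_indep: "\<And>a b c. a *s v0 + b *s v1 + c *s v2 = 0 \<Longrightarrow> a = 0 \<and> b = 0 \<and> c = 0"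
    and w_indep: "\<And>a b. a *s w0 + b *s w1 = 0 \<Longrightarrow> a = 0 \<and> b = 0"
    and annihilate: "\<forall>s\<in>{v0, v1, v2}. vdot w0 s = 0 \<and> vdot w1 s = 0"
  shows "4 < CARD('n)"
proof (rule ccontr)
  assume card: "\<not> 4 < CARD('n)"
  define S where "S = {v2, v1, v0}"
  have dim_S: "vec.dim S = 3"
    unfolding S_def using v_indep by (rule vec_dim_three_independent)
  obtain e where span: "vec.span (insert e S) = UNIV"
  proof (cases "vec.span S = UNIV")
    case True
    then show thesis
      using that[of 0] vec.span_mono[of S "insert 0 S"] by blast
  next
    case False
    then obtain e where "e \<notin> vec.span S"
      by auto
    then have "vec.span (insert e S) = UNIV"
      using dim_S card by (intro vec_span_eq_UNIV_if_dim) (simp add: vec.dim_insert)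
    then show thesis
      by (rule that)
  qed
  txt \<open>The combination of \<open>w0, w1\<close> vanishing on \<open>e\<close> annihilates a spanning set.\<close>
  define a where "a = vdot w0 e"
  define b where "b = vdot w1 e"
  have "vdot (b *s w0 + (- a) *s w1) x = 0" for x
  proof (rule vdot_eq_0_on_span[where T = "insert e S"])
    show "\<forall>s\<in>insert e S. vdot (b *s w0 + (- a) *s w1) s = 0"
      using annihilate by (auto simp: S_def a_def b_def vdot_linear_simps mult.commute)
  qed (simp add: span)
  then have "b *s w0 + (- a) *s w1 = 0"
    by (rule vdot_nondegenerate)
  then have "b = 0 \<and> a = 0"
    using w_indep[of b "- a"] by simp
  have "vdot w0 x = 0" for x
  proof (intro vdot_eq_0_on_span[where T = "insert e S"])
    show "\<forall>s\<in>insert e S. vdot w0 s = 0"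
      using annihilate \<open>b = 0 \<and> a = 0\<close> by (auto simp: S_def a_def)
  qed (simp add: span)
  then have "1 *s w0 + 0 *s w1 = 0"
    using vdot_nondegenerate by auto
  then show False
    using w_indep[of 1 0] by simp
qed

lemma minimal_kronecker_chain_degree_le_1:
  fixes P Q :: "'a::field^'n^'n"
  assumes card: "CARD('n) \<le> 4" and sym: "transpose P = P" "transpose Q = Q"
    and nc: "\<And>x. P *v x = 0 \<Longrightarrow> Q *v x = 0 \<Longrightarrow> x = 0"
    and chain: "kronecker_chain P Q v d"
    and minimal: "\<And>v' d'. kronecker_chain P Q v' d' \<Longrightarrow> d \<le> d'"
  shows "d \<le> 1"
proof (rule ccontr)
  assume "\<not> d \<le> 1"
  from chain have P_0: "P *v v 0 = 0" and P_Suc: "\<And>k. P *v v (Suc k) = - (Q *v v k)"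
    unfolding kronecker_chain_def by (auto simp: eq_neg_iff_add_eq_0)
  have "v 0 \<noteq> 0"
    using minimal[OF kronecker_chain_shift[OF chain]] \<open>\<not> d \<le> 1\<close> by force
  then have "Q *v v 0 \<noteq> 0"
    using nc P_0 by blast
  have Qv_indep: "a = 0 \<and> b = 0" if ab: "a *s (Q *v v 0) + b *s (Q *v v 1) = 0" for a b
  proof (cases "b = 0")
    case True
    then show ?thesis
      using ab \<open>Q *v v 0 \<noteq> 0\<close> by (simp add: vector_mul_eq_0)
  next
    case False
    txt \<open>The dependence gives the chain \<open>b v\<^sub>0 + (a v\<^sub>0 + b v\<^sub>1) t\<close> of degree 1.\<close>
    define v' where
      "v' k = (if k = 0 then b *s v 0 else if k = 1 then a *s v 0 + b *s v 1 else 0)" for k :: nat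
    have "kronecker_chain P Q v' 1"
      unfolding kronecker_chain_def
    proof (intro conjI allI impI)
      show "\<exists>k. v' k \<noteq> 0"
        using \<open>v 0 \<noteq> 0\<close> False by (auto simp: v'_def vector_mul_eq_0)
      show "P *v v' (Suc k) + Q *v v' k = 0" for k
        using ab P_0 P_Suc[of 0]
        by (cases k) (auto simp: v'_def vdot_linear_simps vector_ssub_ldistrib vector_add_ldistrib add.commute)
    qed (simp_all add: v'_def P_0 vector_scalar_commute)
    then show ?thesis
      using minimal \<open>\<not> d \<le> 1\<close> by fastforce
  qed
  have v_indep: "a = 0 \<and> b = 0 \<and> c = 0" if abc: "a *s v 0 + b *s v 1 + c *s v 2 = 0" for a b c
  proof -
    have "b *s (Q *v v 0) + c *s (Q *v v 1) = - (P *v (a *s v 0 + b *s v 1 + c *s v 2))"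
      by (simp add: vdot_linear_simps P_0 P_Suc numeral_2_eq_2)
    then have "b *s (Q *v v 0) + c *s (Q *v v 1) = 0"
      using abc by simp
    then have "b = 0 \<and> c = 0"
      by (rule Qv_indep)
    with abc \<open>v 0 \<noteq> 0\<close> show ?thesis
      by (simp add: vector_mul_eq_0)
  qed
  have "4 < CARD('n)"
    using annihilator_dimension[OF v_indep Qv_indep] kronecker_chain_isotropic(2)[OF sym chain]
    by blast
  with card show False
    by simp
qed

lemma singular_pencil_linear_kernel:
  fixes A B :: "'a::field^'n^'n"
  assumes card: "CARD('n) \<le> 4" and sym: "transpose A = A" "transpose B = B"
    and nc: "\<And>x. A *v x = 0 \<Longrightarrow> B *v x = 0 \<Longrightarrow> x = 0"
    and "binary_det A B = 0"
  obtains w u where "B *v w = 0" "A *v u = 0" "B *v u + A *v w = 0" "w \<noteq> 0 \<or> u \<noteq> 0"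
proof -
  define d where "d = (LEAST d. \<exists>v. kronecker_chain B A v d)"
  obtain v0 d0 where "kronecker_chain B A v0 d0"
    using binary_det_eq_0_imp_kronecker_chain[OF assms(5)] .
  then have "\<exists>d v. kronecker_chain B A v d"
    by blast
  then have "\<exists>v. kronecker_chain B A v d"
    unfolding d_def by (rule LeastI_ex)
  then obtain v where chain: "kronecker_chain B A v d" ..
  have "d \<le> 1"
  proof (rule minimal_kronecker_chain_degree_le_1[OF card sym(2,1) _ chain])
    show "x = 0" if "B *v x = 0" "A *v x = 0" for x
      using nc that by blast
    show "d \<le> d'" if "kronecker_chain B A v' d'" for v' d'
      unfolding d_def using that by (blast intro: Least_le)
  qed
  then have v_2: "v (Suc (Suc k)) = 0" for k
    using chain unfolding kronecker_chain_def by auto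
  obtain k where "v k \<noteq> 0"
    using chain by (auto simp: kronecker_chain_def)
  with v_2 have "v 0 \<noteq> 0 \<or> v 1 \<noteq> 0"
    by (metis One_nat_def not0_implies_Suc)
  moreover have "B *v v (Suc (Suc 0)) + A *v v (Suc 0) = 0" "B *v v (Suc 0) + A *v v 0 = 0"
    "B *v v 0 = 0"
    using chain unfolding kronecker_chain_def by blast+
  ultimately show thesis
    using that[of "v 0" "v 1"] v_2[of 0] by simp
qed

lemma is_hessian_symmetric: "is_hessian A Q \<Longrightarrow> transpose A = A"
  unfolding is_hessian_def by (auto simp: transpose_def vec_eq_iff add.commute)

lemma is_hessian_polar:
  assumes "is_hessian A Q"
  shows "vdot (A *v x) x = 2 * Q x"
proof -
  obtain c where Q: "\<And>x. Q x = (\<Sum>i\<in>UNIV. \<Sum>j\<in>UNIV. c i j * x$i * x$j)"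
    and A: "\<And>i j. A$i$j = c i j + c j i"
    using assms unfolding is_hessian_def by blast
  have "vdot (A *v x) x = (\<Sum>i\<in>UNIV. \<Sum>j\<in>UNIV. c i j * x$i * x$j + c j i * x$j * x$i)"
    unfolding vdot_def matrix_vector_mult_def A by (simp add: sum_distrib_left algebra_simps)
  also have "\<dots> = (\<Sum>i\<in>UNIV. \<Sum>j\<in>UNIV. c i j * x$i * x$j) + (\<Sum>i\<in>UNIV. \<Sum>j\<in>UNIV. c j i * x$j * x$i)"
    by (simp only: sum.distrib)
  also have "(\<Sum>i\<in>UNIV. \<Sum>j\<in>UNIV. c j i * x$j * x$i) = (\<Sum>j\<in>UNIV. \<Sum>i\<in>UNIV. c j i * x$j * x$i)"
    by (rule sum.swap)
  finally show ?thesis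
    by (simp add: Q)
qed

text \<open>In the basis \<open>w, y, -u\<close> the polar forms of \<open>A\<close> and \<open>B\<close> become those of \<open>2 x\<^sub>1 x\<^sub>2\<close> and
  \<open>2 x\<^sub>2 x\<^sub>3\<close>.\<close>

locale pencil_frame =
  fixes A B :: "'a::field^'n^'n" and w y u :: "'a^'n"
  assumes sym_A: "transpose A = A" and sym_B: "transpose B = B"
    and A_u: "A *v u = 0" and B_w: "B *v w = 0" and B_u: "B *v u = - (A *v w)"
    and dual_y: "vdot (A *v w) y = 1"
    and isotropic_y: "vdot (A *v y) y = 0" "vdot (B *v y) y = 0"
    and independent: "\<And>p q r. p *s w + q *s y + r *s u = 0 \<Longrightarrow> p = 0 \<and> q = 0 \<and> r = 0"
begin

lemma gram:
  "vdot (A *v w) w = 0" "vdot (A *v w) u = 0" "vdot (A *v y) w = 1" "vdot (A *v y) u = 0"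
  "vdot (B *v y) w = 0" "vdot (B *v y) u = - 1"
proof -
  show "vdot (A *v w) w = 0"
    using vdot_symmetric_matrix[OF sym_B, of u w] by (simp add: B_u B_w vdot_neg_left)
  show "vdot (A *v w) u = 0" "vdot (A *v y) u = 0" "vdot (B *v y) w = 0"
    by (simp_all add: vdot_symmetric_matrix[OF sym_A, of _ u] vdot_symmetric_matrix[OF sym_B, of _ w] A_u B_w)
  show "vdot (A *v y) w = 1" "vdot (B *v y) u = - 1"
    by (simp_all add: vdot_symmetric_matrix[OF sym_A, of y] vdot_symmetric_matrix[OF sym_B, of y]
        B_u vdot_neg_left dual_y)
qed

lemma forms_on_frame:
  assumes hA: "is_hessian A Q1" and hB: "is_hessian B Q2" and two: "(2::'a) \<noteq> 0"
    and z: "vdot (A *v w) z = 0" "vdot (A *v y) z = 0" "vdot (B *v y) z = 0"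
  shows "Q1 (p *s w + q *s y + r *s u + s *s z) = p * q + s\<^sup>2 * Q1 z"
    and "Q2 (p *s w + q *s y + r *s u + s *s z) = s\<^sup>2 * Q2 z - q * r"
proof -
  let ?v = "p *s w + q *s y + r *s u + s *s z"
  have swap: "vdot (A *v z) x = vdot (A *v x) z" "vdot (B *v z) x = vdot (B *v x) z"
    if "x \<in> {w, y, u}" for x
    by (simp_all add: vdot_symmetric_matrix[OF sym_A] vdot_symmetric_matrix[OF sym_B])
  have "2 * Q1 ?v = 2 * (p * q + s\<^sup>2 * Q1 z)"
    unfolding is_hessian_polar[OF hA, symmetric]
    by (simp add: is_hessian_polar[OF hA, of z] vdot_linear_simps A_u B_w B_u swap[of w] swap[of y]
        swap[of u] gram dual_y isotropic_y z vdot_symmetric_matrix[OF sym_A, of y w]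
        power2_eq_square algebra_simps)
  then show "Q1 ?v = p * q + s\<^sup>2 * Q1 z"
    using mult_left_cancel[OF two] by blast
  have "2 * Q2 ?v = 2 * (s\<^sup>2 * Q2 z - q * r)"
    unfolding is_hessian_polar[OF hB, symmetric]
    by (simp add: is_hessian_polar[OF hB, of z] vdot_linear_simps A_u B_w B_u swap[of w] swap[of y]
        swap[of u] gram dual_y isotropic_y z vdot_neg_left power2_eq_square algebra_simps)
  then show "Q2 ?v = s\<^sup>2 * Q2 z - q * r"
    using mult_left_cancel[OF two] by blast
qed

end

lemma singular_pencil_frame_exists:
  fixes A B :: "'a::field^'n^'n"
  assumes card: "CARD('n) \<le> 4" and two: "(2::'a) \<noteq> 0"
    and sym: "transpose A = A" "transpose B = B"
    and nc: "\<And>x. A *v x = 0 \<Longrightarrow> B *v x = 0 \<Longrightarrow> x = 0" and bd: "binary_det A B = 0"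
  obtains w y u where "pencil_frame A B w y u"
proof -
  obtain w u where B_w: "B *v w = 0" and A_u: "A *v u = 0" and pencil: "B *v u + A *v w = 0"
    and nonzero: "w \<noteq> 0 \<or> u \<noteq> 0"
    using singular_pencil_linear_kernel[OF card sym nc bd] .
  define f where "f = A *v w"
  have B_u: "B *v u = - f"
    using pencil by (simp add: f_def eq_neg_iff_add_eq_0)
  have "f \<noteq> 0"
  proof
    assume "f = 0"
    then have "w = 0" "u = 0"
      using nc A_u B_w B_u by (auto simp: f_def)
    with nonzero show False
      by simp
  qed
  then obtain k where "f$k \<noteq> 0"
    by (auto simp: vec_eq_iff)
  define y0 where "y0 = (1 / f$k) *s axis k 1"
  have f_y0: "vdot f y0 = 1"
    using \<open>f$k \<noteq> 0\<close> by (simp add: y0_def vdot_scale_right vdot_axis)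
  have f_w: "vdot f w = 0"
    using vdot_symmetric_matrix[OF sym(2), of u w] by (simp add: f_def B_u B_w vdot_neg_left)
  have f_u: "vdot f u = 0"
    using vdot_symmetric_matrix[OF sym(1), of w u] by (simp add: f_def A_u)
  have y0_gram: "vdot (A *v y0) w = 1" "vdot (A *v y0) u = 0"
    "vdot (B *v y0) w = 0" "vdot (B *v y0) u = - 1"
    by (simp_all add: vdot_symmetric_matrix[OF sym(1), of y0] vdot_symmetric_matrix[OF sym(2), of y0]
        A_u B_w B_u vdot_neg_left f_y0 flip: f_def)
  define a where "a = vdot (A *v y0) y0 / 2"
  define b where "b = vdot (B *v y0) y0 / 2"
  have a: "vdot (A *v y0) y0 = 2 * a" and b: "vdot (B *v y0) y0 = 2 * b"
    using two by (simp_all add: a_def b_def)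
  define y where "y = y0 - a *s w + b *s u"
  have "pencil_frame A B w y u"
  proof
    show "vdot (A *v w) y = 1"
      by (simp add: y_def vdot_linear_simps f_y0 f_w f_u flip: f_def)
    show "vdot (A *v y) y = 0"
      by (simp add: y_def vdot_linear_simps A_u y0_gram a f_y0 f_w f_u algebra_simps flip: f_def)
    show "vdot (B *v y) y = 0"
      by (simp add: y_def vdot_linear_simps B_w B_u y0_gram b f_y0 f_w f_u vdot_neg_left algebra_simps)
    show "p = 0 \<and> q = 0 \<and> r = 0" if combination: "p *s w + q *s y + r *s u = 0" for p q r
    proof -
      have "q = vdot f (p *s w + q *s y + r *s u)"
        by (simp add: y_def vdot_linear_simps f_y0 f_w f_u)
      then have "q = 0"
        using combination by simp
      have "p *s f = A *v (p *s w + q *s y + r *s u)"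
        using \<open>q = 0\<close> by (simp add: vdot_linear_simps A_u f_def)
      then have "p = 0"
        using combination \<open>f \<noteq> 0\<close> by (simp add: vector_mul_eq_0)
      moreover have "u \<noteq> 0"
        using B_u \<open>f \<noteq> 0\<close> by auto
      ultimately show ?thesis
        using combination \<open>q = 0\<close> by (simp add: vector_mul_eq_0)
    qed
  qed (simp_all add: sym A_u B_w B_u f_def)
  then show thesis
    by (rule that)
qed

lemma (in pencil_frame) orthogonal_fourth_vector:
  assumes card: "CARD('n) = 4" and nc: "\<And>x. A *v x = 0 \<Longrightarrow> B *v x = 0 \<Longrightarrow> x = 0"
  obtains z where "vdot (A *v w) z = 0" "vdot (A *v y) z = 0" "vdot (B *v y) z = 0"
    and "\<And>p q r s. p *s w + q *s y + r *s u + s *s z = 0 \<Longrightarrow> p = 0 \<and> q = 0 \<and> r = 0 \<and> s = 0"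
    and "vdot (A *v z) z \<noteq> 0 \<or> vdot (B *v z) z \<noteq> 0"
proof -
  let ?F = "{u, y, w}"
  have dim_F: "vec.dim ?F = 3"
    using independent by (rule vec_dim_three_independent)
  have "vec.span ?F \<noteq> UNIV"
  proof
    assume "vec.span ?F = UNIV"
    then have "vec.dim ?F = vec.dim (UNIV :: ('a^'n) set)"
      by (metis vec.dim_span)
    with dim_F card show False
      by (simp add: card_cart_basis)
  qed
  then obtain e where e: "e \<notin> vec.span ?F"
    by auto
  define z where "z = e - vdot (A *v w) e *s y - vdot (A *v y) e *s w + vdot (B *v y) e *s u"
  have "e - z = vdot (A *v w) e *s y + vdot (A *v y) e *s w - vdot (B *v y) e *s u"
    by (simp add: z_def algebra_simps)
  also have "\<dots> \<in> vec.span ?F"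
    by (intro vec.span_add vec.span_diff vec.span_scale vec.span_base) auto
  finally have "e - z \<in> vec.span ?F" .
  then have z: "z \<notin> vec.span ?F"
    using e vec.span_add by fastforce
  have z_gram: "vdot (A *v w) z = 0" "vdot (A *v y) z = 0" "vdot (B *v y) z = 0"
    by (simp_all add: z_def vdot_linear_simps gram dual_y isotropic_y
        vdot_symmetric_matrix[OF sym_A, of y w])
  have indep: "p = 0 \<and> q = 0 \<and> r = 0 \<and> s = 0"
    if combination: "p *s w + q *s y + r *s u + s *s z = 0" for p q r s
  proof -
    have "s *s z = - (p *s w + q *s y + r *s u)"
      unfolding eq_neg_iff_add_eq_0 using combination by (simp add: ac_simps)
    moreover have "- (p *s w + q *s y + r *s u) \<in> vec.span ?F"
      by (intro vec.span_neg vec.span_add vec.span_scale vec.span_base) auto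
    ultimately have "s *s z \<in> vec.span ?F"
      by (simp only:)
    then have "s = 0"
      using z vec.span_scale[of "s *s z" ?F "1 / s"] by (auto split: if_splits)
    with combination independent show ?thesis
      by simp
  qed
  have span: "vec.span (insert z ?F) = UNIV"
    using z dim_F card by (intro vec_span_eq_UNIV_if_dim) (simp add: vec.dim_insert)
  have "vdot (A *v z) z \<noteq> 0 \<or> vdot (B *v z) z \<noteq> 0"
  proof (rule ccontr)
    assume "\<not> ?thesis"
    then have isotropic_z: "vdot (A *v z) z = 0" "vdot (B *v z) z = 0"
      by auto
    have "A *v z = 0"
    proof (rule vdot_nondegenerate, rule vdot_eq_0_on_span)
      show "\<forall>s\<in>insert z ?F. vdot (A *v z) s = 0"
        using isotropic_z z_gram A_u
        by (simp add: vdot_symmetric_matrix[OF sym_A, of z w] vdot_symmetric_matrix[OF sym_A, of z y]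
            vdot_symmetric_matrix[OF sym_A, of z u])
    qed (simp add: span)
    moreover have "B *v z = 0"
    proof (rule vdot_nondegenerate, rule vdot_eq_0_on_span)
      show "\<forall>s\<in>insert z ?F. vdot (B *v z) s = 0"
        using isotropic_z z_gram B_w B_u
        by (simp add: vdot_symmetric_matrix[OF sym_B, of z w] vdot_symmetric_matrix[OF sym_B, of z y]
            vdot_symmetric_matrix[OF sym_B, of z u] vdot_neg_left)
    qed (simp add: span)
    ultimately have "0 *s w + 0 *s y + 0 *s u + 1 *s z = 0"
      using nc by simp
    then show False
      using indep by fastforce
  qed
  with z_gram indep show thesis
    by (rule that)
qed

lemma vector_matrix_mult_rows: "x v* N = (\<Sum>i\<in>UNIV. x$i *s N$i)"
  by (simp add: vec_eq_iff vector_matrix_mult_def)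

lemma invertible_iff_independent_rows:
  fixes N :: "'a::field^'n^'n"
  shows "invertible N \<longleftrightarrow> (\<forall>c. (\<Sum>i\<in>UNIV. c i *s N$i) = 0 \<longrightarrow> (\<forall>i. c i = 0))"
  by (simp add: invertible_right_inverse matrix_right_invertible_independent_rows row_def)

lemma k_equiv_iff_vector_matrix_mult:
  "k_equiv Q1 Q2 P1 P2 \<longleftrightarrow> (\<exists>(M::'a::field^2^2) (N::'a^'n^'n). invertible M \<and> invertible N \<and>
     (\<forall>x. P1 x = M$1$1 * Q1 (x v* N) + M$1$2 * Q2 (x v* N)) \<and>
     (\<forall>x. P2 x = M$2$1 * Q1 (x v* N) + M$2$2 * Q2 (x v* N)))"
proof -
  have "(\<chi> j. \<Sum>i\<in>UNIV. N$i$j * x$i) = x v* N" for N :: "'a^'n^'n" and x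
    by (simp add: vector_matrix_mult_def mult.commute)
  then show ?thesis
    unfolding k_equiv_def by simp
qed

theorem k_equiv_normal_form_3:
  fixes Q1 Q2 :: "'a::field^3 \<Rightarrow> 'a" and A B :: "'a^3^3"
  assumes two: "(2::'a) \<noteq> 0" and hA: "is_hessian A Q1" and hB: "is_hessian B Q2"
    and nc: "\<forall>v. A *v v = 0 \<and> B *v v = 0 \<longrightarrow> v = 0" and bd: "binary_det A B = 0"
  shows "k_equiv Q1 Q2 (\<lambda>x. x$1 * x$2) (\<lambda>x. x$2 * x$3)"
proof -
  have nc': "\<And>x. A *v x = 0 \<Longrightarrow> B *v x = 0 \<Longrightarrow> x = 0"
    using nc by blast
  obtain w y u where "pencil_frame A B w y u"
    by (rule singular_pencil_frame_exists[OF _ two is_hessian_symmetric[OF hA]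
          is_hessian_symmetric[OF hB] nc' bd]) simp
  then interpret pencil_frame A B w y u .
  define M :: "'a^2^2" where "M = vector [vector [1, 0], vector [0, 1]]"
  define N :: "'a^3^3" where "N = vector [w, y, - u]"
  have "invertible M"
    by (simp add: M_def invertible_det_nz det_2)
  have "invertible N"
    unfolding invertible_iff_independent_rows
  proof (rule allI, rule impI)
    fix c :: "3 \<Rightarrow> 'a"
    assume "(\<Sum>i\<in>UNIV. c i *s N$i) = 0"
    then have "c 1 *s w + c 2 *s y + (- c 3) *s u = 0"
      by (simp add: sum_3 N_def vector_smult_lneg vector_smult_rneg)
    from independent[OF this] show "\<forall>i. c i = 0"
      by (simp add: forall_3)
  qed
  have xN: "x v* N = x$1 *s w + x$2 *s y + (- x$3) *s u + 0 *s 0" for x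
    by (simp add: vector_matrix_mult_rows sum_3 N_def vector_smult_lneg)
  have "Q1 (x v* N) = x$1 * x$2" "Q2 (x v* N) = x$2 * x$3" for x
    unfolding xN by (subst forms_on_frame[OF hA hB two]; simp)+
  with \<open>invertible M\<close> \<open>invertible N\<close> show ?thesis
    unfolding k_equiv_iff_vector_matrix_mult
    by (intro exI[of _ M] exI[of _ N] conjI allI) (simp_all add: M_def)
qed

theorem k_equiv_normal_form_4:
  fixes Q1 Q2 :: "'a::field^4 \<Rightarrow> 'a" and A B :: "'a^4^4"
  assumes two: "(2::'a) \<noteq> 0" and hA: "is_hessian A Q1" and hB: "is_hessian B Q2"
    and nc: "\<forall>v. A *v v = 0 \<and> B *v v = 0 \<longrightarrow> v = 0" and bd: "binary_det A B = 0"
  shows "k_equiv Q1 Q2 (\<lambda>x. x$1 * x$2) (\<lambda>x. x$2 * x$3 - x$4 ^ 2)"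
proof -
  have card: "CARD(4) = 4"
    by simp
  have nc': "\<And>x. A *v x = 0 \<Longrightarrow> B *v x = 0 \<Longrightarrow> x = 0"
    using nc by blast
  obtain w y u where "pencil_frame A B w y u"
    by (rule singular_pencil_frame_exists[OF _ two is_hessian_symmetric[OF hA]
          is_hessian_symmetric[OF hB] nc' bd]) (simp add: card)
  then interpret pencil_frame A B w y u .
  obtain z where z_gram: "vdot (A *v w) z = 0" "vdot (A *v y) z = 0" "vdot (B *v y) z = 0"
    and independent4:
      "\<And>p q r s. p *s w + q *s y + r *s u + s *s z = 0 \<Longrightarrow> p = 0 \<and> q = 0 \<and> r = 0 \<and> s = 0"
    and "vdot (A *v z) z \<noteq> 0 \<or> vdot (B *v z) z \<noteq> 0"
    using orthogonal_fourth_vector[OF card nc'] by blast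
  define \<alpha> where "\<alpha> = Q1 z"
  define \<beta> where "\<beta> = Q2 z"
  have "\<alpha> \<noteq> 0 \<or> \<beta> \<noteq> 0"
    using \<open>vdot (A *v z) z \<noteq> 0 \<or> vdot (B *v z) z \<noteq> 0\<close>
    by (auto simp: \<alpha>_def \<beta>_def is_hessian_polar[OF hA] is_hessian_polar[OF hB])
  then obtain \<epsilon> \<zeta> where \<epsilon>\<zeta>: "\<alpha> * \<epsilon> + \<beta> * \<zeta> = - 1"
  proof (cases "\<alpha> = 0")
    case True
    with \<open>\<alpha> \<noteq> 0 \<or> \<beta> \<noteq> 0\<close> show thesis
      using that[of 0 "- 1 / \<beta>"] by simp
  next
    case False
    then show thesis
      using that[of "- 1 / \<alpha>" 0] by simp
  qed
  define M :: "'a^2^2" where "M = vector [vector [\<beta>, - \<alpha>], vector [\<epsilon>, \<zeta>]]"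
  define N :: "'a^4^4" where
    "N = (\<chi> i. if i = 1 then (- \<zeta>) *s w + (- \<epsilon>) *s u else if i = 2 then y
      else if i = 3 then (- \<alpha>) *s w + \<beta> *s u else z)"
  have "invertible M"
    using \<epsilon>\<zeta> by (simp add: invertible_det_nz det_2 M_def algebra_simps)
  have "invertible N"
    unfolding invertible_iff_independent_rows
  proof (rule allI, rule impI)
    fix c :: "4 \<Rightarrow> 'a"
    assume "(\<Sum>i\<in>UNIV. c i *s N$i) = 0"
    then have
      "(- \<zeta> * c 1 - \<alpha> * c 3) *s w + c 2 *s y + (\<beta> * c 3 - \<epsilon> * c 1) *s u + c 4 *s z = 0"
      by (simp add: sum_4 N_def algebra_simps)
    from independent4[OF this]
    have c: "- \<zeta> * c 1 - \<alpha> * c 3 = 0" "\<beta> * c 3 - \<epsilon> * c 1 = 0" "c 2 = 0" "c 4 = 0"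
      by auto
    have "c 1 = - ((\<alpha> * \<epsilon> + \<beta> * \<zeta>) * c 1)"
      by (simp add: \<epsilon>\<zeta>)
    also have "\<dots> = \<beta> * (- \<zeta> * c 1 - \<alpha> * c 3) + \<alpha> * (\<beta> * c 3 - \<epsilon> * c 1)"
      by (simp add: algebra_simps)
    finally have "c 1 = 0"
      unfolding c by simp
    have "c 3 = - ((\<alpha> * \<epsilon> + \<beta> * \<zeta>) * c 3)"
      by (simp add: \<epsilon>\<zeta>)
    also have "\<dots> = \<epsilon> * (- \<zeta> * c 1 - \<alpha> * c 3) - \<zeta> * (\<beta> * c 3 - \<epsilon> * c 1)"
      by (simp add: algebra_simps)
    finally have "c 3 = 0"
      unfolding c by simp
    with \<open>c 1 = 0\<close> c show "\<forall>i. c i = 0"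
      by (simp add: forall_4)
  qed
  have xN: "x v* N =
      (- \<zeta> * x$1 - \<alpha> * x$3) *s w + x$2 *s y + (\<beta> * x$3 - \<epsilon> * x$1) *s u + x$4 *s z" for x
    by (simp add: vector_matrix_mult_rows sum_4 N_def algebra_simps)
  have "\<beta> * Q1 (x v* N) - \<alpha> * Q2 (x v* N) = - (\<alpha> * \<epsilon> + \<beta> * \<zeta>) * (x$1 * x$2)"
    and "\<epsilon> * Q1 (x v* N) + \<zeta> * Q2 (x v* N) =
      - (\<alpha> * \<epsilon> + \<beta> * \<zeta>) * (x$2 * x$3 - x$4 ^ 2)" for x
    unfolding xN forms_on_frame[OF hA hB two z_gram] \<alpha>_def[symmetric] \<beta>_def[symmetric]
    by (simp_all add: algebra_simps power2_eq_square)
  with \<open>invertible M\<close> \<open>invertible N\<close> show ?thesis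
    unfolding k_equiv_iff_vector_matrix_mult
    by (intro exI[of _ M] exI[of _ N] conjI allI) (simp_all add: M_def \<epsilon>\<zeta>)
qed

theorem lemma4p11:
  fixes Q1 Q2 :: "'a::field ^ 3 \<Rightarrow> 'a" and A B :: "'a ^ 3 ^ 3"
    and R1 R2 :: "'a ^ 4 \<Rightarrow> 'a" and C D :: "'a ^ 4 ^ 4"
  assumes char: "(2::'a) \<noteq> 0"
  shows "(is_quadratic_form Q1 \<and> is_quadratic_form Q2 \<and> is_hessian A Q1 \<and> is_hessian B Q2 \<and>
          (\<forall>v. A *v v = 0 \<and> B *v v = 0 \<longrightarrow> v = 0) \<and> binary_det A B = 0
          \<longrightarrow> k_equiv Q1 Q2 (\<lambda>x. x$1 * x$2) (\<lambda>x. x$2 * x$3))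
       \<and> (is_quadratic_form R1 \<and> is_quadratic_form R2 \<and> is_hessian C R1 \<and> is_hessian D R2 \<and>
          (\<forall>v. C *v v = 0 \<and> D *v v = 0 \<longrightarrow> v = 0) \<and> binary_det C D = 0
          \<longrightarrow> k_equiv R1 R2 (\<lambda>x. x$1 * x$2) (\<lambda>x. x$2 * x$3 - x$4 ^ 2))"
  using k_equiv_normal_form_3[OF char, of A Q1 B Q2] k_equiv_normal_form_4[OF char, of C R1 D R2]
  by blast

end
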